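(* For $G,H,H'\in\mathfrak{D}$ and $\xi\in\mathcal{H}(G,H)$, let $$\Theta_{G,H'}(\xi)=\{\zeta\in\mathcal{H}(G,H'):\mathcal{G}(\zeta)=\mathcal{G}(\xi)\}.$$ Let $R,S\in\mathfrak{D}$ and $\mathfrak{D}'\subseteq\mathfrak{D}$. Then $R\sqsubseteq_\Gamma S$ with respect to $\mathfrak{D}'$ holds if and only if $$\#\Theta_{G,R}(\xi)\le\#\Theta_{G,S}(\xi)\quad\text{for all } G\in\mathfrak{D}' \text{ and all } \xi\in\mathcal{H}(G,R).$$
   Context: **Digraphs and homomorphisms.** - A digraph $G$ is a pair $(V(G),A(G))$, where $V(G)$ is a finite non-empty set and $A(G)\subseteq V(G)\times V(G)$. Arcs are written $vw$. - A homomorphism $\xi:G\to H$ is a map $V(G)\to V(H)$ with $\xi(v)\xi(w)\in A(H)$ for all $vw\in A(G)$. $\mathcal{H}(G,H)$ is the set of homomorphisms. - $\mathfrak{D}$ is the class of all digraphs. **Connectivity.** - Two vertices $u,w$ are adjacent if $uw\in A(G)$ or $wu\in A(G)$. - For $X\subseteq V(G)$ and $v,w\in X$, the vertices $v$ and $w$ are connected in $X$ if $v=w$, or if there are $z_0=v,\dots,z_I=w$ in $X$ with consecutive terms adjacent. - $\gamma_X(v)$ is the set of $w\in X$ connected to $v$ in $X$. - $\Gamma_\xi(v):=\gamma_{\xi^{-1}(\xi(v))}(v)$. **The quotient digraph.** For $\xi\in\mathcal{H}(G,H)$, $\mathcal{G}(\xi)$ is the digraph with: - vertex set $\{\Gamma_\xi(v):v\in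 V(G)\}$, a partition of $V(G)$; - arcs $\mathfrak{a}\mathfrak{b}$ whenever there are $a\in\mathfrak{a}$, $b\in\mathfrak{b}$ with $ab\in A(G)$. **Schemes.** - For a class $\mathfrak{D}'$, let $\mathfrak{D}'_r$ be a fixed system of representatives up to isomorphism. - A Hom-scheme from $R$ to $S$ with respect to $\mathfrak{D}'$ is a family of maps $\rho_G:\mathcal{H}(G,R)\to\mathcal{H}(G,S)$, $G\in\mathfrak{D}'_r$. - It is strong if all $\rho_G$ are injective. - It is a $\Gamma$-scheme if $\Gamma_{\rho_G(\xi)}(v)=\Gamma_\xi(v)$ for all $G\in\mathfrak{D}'_r$, $\xi\in\mathcal{H}(G,R)$ and $v\in V(G)$. - $R\sqsubseteq_\Gamma S$ with respect to $\mathfrak{D}'$ means that a strong $\Gamma$-scheme exists. *)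

theory Defs
  imports "HOL-Library.FuncSet"
begin

type_synonym 'a digraph = "'a set \<times> ('a \<times> 'a) set"

definition verts :: "'a digraph \<Rightarrow> 'a set" where "verts G = fst G"
definition arcs :: "'a digraph \<Rightarrow> ('a \<times> 'a) set" where "arcs G = snd G"

definition is_digraph :: "'a digraph \<Rightarrow> bool" where
  "is_digraph G \<longleftrightarrow> finite (verts G) \<and> verts G \<noteq> {} \<and> arcs G \<subseteq> verts G \<times> verts G"

definition homs :: "'a digraph \<Rightarrow> 'b digraph \<Rightarrow> ('a \<Rightarrow> 'b) set" where
  "homs G H = {\<xi> \<in> verts G \<rightarrow>\<^sub>E verts H. \<forall>(v,w) \<in> arcs G. (\<xi> v, \<xi> w) \<in> arcs H}"

definition isomorphic :: "'a digraph \<Rightarrow> 'a digraph \<Rightarrow> bool" where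
  "isomorphic G H \<longleftrightarrow> (\<exists>f. bij_betw f (verts G) (verts H) \<and>
     (\<forall>u\<in>verts G. \<forall>v\<in>verts G. (u,v) \<in> arcs G \<longleftrightarrow> (f u, f v) \<in> arcs H))"

definition adj_in :: "'a digraph \<Rightarrow> 'a set \<Rightarrow> ('a \<times> 'a) set" where
  "adj_in G X = {(u,w). u \<in> X \<and> w \<in> X \<and> ((u,w) \<in> arcs G \<or> (w,u) \<in> arcs G)}"

definition connected_in :: "'a digraph \<Rightarrow> 'a set \<Rightarrow> 'a \<Rightarrow> 'a \<Rightarrow> bool" where
  "connected_in G X v w \<longleftrightarrow> v \<in> X \<and> w \<in> X \<and> (v = w \<or> (v,w) \<in> (adj_in G X)\<^sup>+)"

definition gamma :: "'a digraph \<Rightarrow> 'a set \<Rightarrow> 'a \<Rightarrow> 'a set" where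
  "gamma G X v = {w \<in> X. connected_in G X v w}"

definition Gamma :: "'a digraph \<Rightarrow> ('a \<Rightarrow> 'b) \<Rightarrow> 'a \<Rightarrow> 'a set" where
  "Gamma G \<xi> v = gamma G {u \<in> verts G. \<xi> u = \<xi> v} v"

definition quot :: "'a digraph \<Rightarrow> ('a \<Rightarrow> 'b) \<Rightarrow> 'a set digraph" where
  "quot G \<xi> = (let Q = {Gamma G \<xi> v | v. v \<in> verts G} in
     (Q, {(a,b). a \<in> Q \<and> b \<in> Q \<and> (\<exists>x\<in>a. \<exists>y\<in>b. (x,y) \<in> arcs G)}))"

definition Theta :: "'a digraph \<Rightarrow> 'c digraph \<Rightarrow> ('a \<Rightarrow> 'b) \<Rightarrow> ('a \<Rightarrow> 'c) set" where
  "Theta G H' \<xi> = {\<zeta> \<in> homs G H'. quot G \<zeta> = quot G \<xi>}"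

definition system_of_reps :: "'a digraph set \<Rightarrow> 'a digraph set \<Rightarrow> bool" where
  "system_of_reps D Dr \<longleftrightarrow> Dr \<subseteq> D \<and> (\<forall>G\<in>D. \<exists>!H. H \<in> Dr \<and> isomorphic G H)"

definition hom_scheme :: "'a digraph set \<Rightarrow> 'b digraph \<Rightarrow> 'c digraph
     \<Rightarrow> ('a digraph \<Rightarrow> ('a \<Rightarrow> 'b) \<Rightarrow> ('a \<Rightarrow> 'c)) \<Rightarrow> bool" where
  "hom_scheme Dr R S \<rho> \<longleftrightarrow> (\<forall>G\<in>Dr. \<forall>\<xi>\<in>homs G R. \<rho> G \<xi> \<in> homs G S)"

definition strong_scheme :: "'a digraph set \<Rightarrow> 'b digraph \<Rightarrow> 'c digraph
     \<Rightarrow> ('a digraph \<Rightarrow> ('a \<Rightarrow> 'b) \<Rightarrow> ('a \<Rightarrow> 'c)) \<Rightarrow> bool" where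
  "strong_scheme Dr R S \<rho> \<longleftrightarrow> (\<forall>G\<in>Dr. inj_on (\<rho> G) (homs G R))"

definition Gamma_scheme :: "'a digraph set \<Rightarrow> 'b digraph \<Rightarrow> 'c digraph
     \<Rightarrow> ('a digraph \<Rightarrow> ('a \<Rightarrow> 'b) \<Rightarrow> ('a \<Rightarrow> 'c)) \<Rightarrow> bool" where
  "Gamma_scheme Dr R S \<rho> \<longleftrightarrow>
     (\<forall>G\<in>Dr. \<forall>\<xi>\<in>homs G R. \<forall>v\<in>verts G. Gamma G (\<rho> G \<xi>) v = Gamma G \<xi> v)"

text \<open>R \<sqsubseteq>_\<Gamma> S w.r.t. the class with representative system Dr.\<close>
definition Gamma_leq :: "'a digraph set \<Rightarrow> 'b digraph \<Rightarrow> 'c digraph \<Rightarrow> bool" where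
  "Gamma_leq Dr R S \<longleftrightarrow> (\<exists>\<rho>. hom_scheme Dr R S \<rho> \<and> strong_scheme Dr R S \<rho> \<and> Gamma_scheme Dr R S \<rho>)"

end

theory Submission
  imports Defs
begin

text \<open>
  A \<open>\<Gamma>\<close>-scheme leaves every \<open>\<Gamma>\<^sub>\<xi>(v)\<close>, hence the quotient \<open>\<G>(\<xi>)\<close>, unchanged, so a strong
  \<open>\<Gamma>\<close>-scheme restricts to injections \<open>\<Theta>\<^sub>G\<^sub>,\<^sub>R(\<xi>) \<rightarrow> \<Theta>\<^sub>G\<^sub>,\<^sub>S(\<xi>)\<close>. Conversely, the sets
  \<open>\<Theta>\<^sub>G\<^sub>,\<^sub>R(\<xi>)\<close> are the fibres of \<open>\<xi> \<mapsto> \<G>(\<xi>)\<close> on \<open>\<H>(G,R)\<close>, and injections between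
  corresponding fibres glue to a strong \<open>\<Gamma>\<close>-scheme. Schemes only see the representatives,
  while the counting condition ranges over all of \<open>\<D>'\<close>; the two agree because pulling
  homomorphisms back along an isomorphism \<open>G \<cong> H\<close> is a bijection between the respective
  sets \<open>\<Theta>\<close>.
\<close>

lemma trancl_map:
  assumes "(x, y) \<in> r\<^sup>+" and "\<And>a b. (a, b) \<in> r \<Longrightarrow> (f a, f b) \<in> s"
  shows "(f x, f y) \<in> s\<^sup>+"
  using assms(1)
proof (induction rule: trancl_induct)
  case (base y)
  then show ?case using assms(2) by blast
next
  case (step y z)
  then show ?case using assms(2) by (meson trancl.trancl_into_trancl)
qed

subsection \<open>The blocks \<open>\<Gamma>\<^sub>\<xi>(v)\<close>\<close>

lemma connected_in_sym: "connected_in G X v w \<Longrightarrow> connected_in G X w v"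
proof -
  have "sym (adj_in G X)" unfolding adj_in_def by (auto intro: symI)
  then have "sym ((adj_in G X)\<^sup>+)" by (rule sym_trancl)
  then show "connected_in G X v w \<Longrightarrow> connected_in G X w v"
    unfolding connected_in_def by (auto dest: symD)
qed

lemma connected_in_trans:
  "connected_in G X u v \<Longrightarrow> connected_in G X v w \<Longrightarrow> connected_in G X u w"
  unfolding connected_in_def by (metis trancl_trans)

lemma Gamma_self: "v \<in> verts G \<Longrightarrow> v \<in> Gamma G \<xi> v"
  unfolding Gamma_def gamma_def connected_in_def by auto

lemma Gamma_subset_verts: "Gamma G \<xi> v \<subseteq> verts G"
  unfolding Gamma_def gamma_def by auto

lemma Gamma_eq_if_mem:
  assumes "w \<in> Gamma G \<xi> u"
  shows "Gamma G \<xi> w = Gamma G \<xi> u"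
proof -
  define X where "X = {x \<in> verts G. \<xi> x = \<xi> u}"
  have "\<xi> w = \<xi> u" and uw: "connected_in G X u w"
    using assms unfolding Gamma_def gamma_def X_def by auto
  then have "{x \<in> verts G. \<xi> x = \<xi> w} = X" unfolding X_def by auto
  moreover have "connected_in G X w x \<longleftrightarrow> connected_in G X u x" for x
    using connected_in_trans[OF uw] connected_in_trans[OF connected_in_sym[OF uw]] by blast
  ultimately show ?thesis unfolding Gamma_def gamma_def X_def by simp
qed

lemma quot_eq_iff:
  "quot G \<zeta> = quot G \<xi> \<longleftrightarrow> (\<forall>v\<in>verts G. Gamma G \<zeta> v = Gamma G \<xi> v)"
proof
  assume "quot G \<zeta> = quot G \<xi>"
  then have blocks: "Gamma G \<zeta> ` verts G = Gamma G \<xi> ` verts G"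
    unfolding quot_def Setcompr_eq_image Let_def by (simp add: prod_eq_iff)
  show "\<forall>v\<in>verts G. Gamma G \<zeta> v = Gamma G \<xi> v"
  proof
    fix v assume v: "v \<in> verts G"
    then have "Gamma G \<zeta> v \<in> Gamma G \<xi> ` verts G" using blocks by blast
    then obtain u where u: "Gamma G \<zeta> v = Gamma G \<xi> u" by blast
    then have "v \<in> Gamma G \<xi> u" using Gamma_self[OF v, of \<zeta>] by simp
    then show "Gamma G \<zeta> v = Gamma G \<xi> v" using u by (simp add: Gamma_eq_if_mem)
  qed
next
  assume "\<forall>v\<in>verts G. Gamma G \<zeta> v = Gamma G \<xi> v"
  then have "Gamma G \<zeta> ` verts G = Gamma G \<xi> ` verts G" by (intro image_cong) auto
  then show "quot G \<zeta> = quot G \<xi>" unfolding quot_def Setcompr_eq_image Let_def by simp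
qed

lemma Gamma_image_subset:
  assumes maps: "f ` verts G \<subseteq> verts H"
    and arcs: "\<And>u w. (u, w) \<in> arcs G \<Longrightarrow> (f u, f w) \<in> arcs H"
    and compat: "\<And>u. u \<in> verts G \<Longrightarrow> \<theta> u = \<eta> (f u)"
    and v: "v \<in> verts G"
  shows "f ` Gamma G \<theta> v \<subseteq> Gamma H \<eta> (f v)"
proof
  define X where "X = {u \<in> verts G. \<theta> u = \<theta> v}"
  define Y where "Y = {y \<in> verts H. \<eta> y = \<eta> (f v)}"
  have XY: "f x \<in> Y" if "x \<in> X" for x
    using that maps compat v unfolding X_def Y_def by auto
  have adj: "(f a, f b) \<in> adj_in H Y" if "(a, b) \<in> adj_in G X" for a b
    using that XY arcs unfolding adj_in_def by auto
  fix y assume "y \<in> f ` Gamma G \<theta> v"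
  then obtain w where y: "y = f w" and "w \<in> X" and "connected_in G X v w"
    unfolding Gamma_def gamma_def X_def by blast
  then have "connected_in H Y (f v) (f w)"
    using XY v trancl_map[of v w "adj_in G X" f, OF _ adj] unfolding connected_in_def X_def
    by auto
  then show "y \<in> Gamma H \<eta> (f v)" unfolding Gamma_def gamma_def Y_def y connected_in_def
    by auto
qed

subsection \<open>Transport along isomorphisms\<close>

lemma homsI:
  "\<xi> \<in> verts G \<rightarrow>\<^sub>E verts H \<Longrightarrow> (\<And>u w. (u, w) \<in> arcs G \<Longrightarrow> (\<xi> u, \<xi> w) \<in> arcs H)
    \<Longrightarrow> \<xi> \<in> homs G H"
  unfolding homs_def by auto

lemma homs_arc: "\<xi> \<in> homs G H \<Longrightarrow> (u, w) \<in> arcs G \<Longrightarrow> (\<xi> u, \<xi> w) \<in> arcs H"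
  unfolding homs_def by auto

lemma homs_PiE: "\<xi> \<in> homs G H \<Longrightarrow> \<xi> \<in> verts G \<rightarrow>\<^sub>E verts H"
  unfolding homs_def by auto

definition digraph_iso :: "('a \<Rightarrow> 'b) \<Rightarrow> 'a digraph \<Rightarrow> 'b digraph \<Rightarrow> bool" where
  "digraph_iso f G H \<longleftrightarrow> bij_betw f (verts G) (verts H) \<and>
     (\<forall>u\<in>verts G. \<forall>v\<in>verts G. (u, v) \<in> arcs G \<longleftrightarrow> (f u, f v) \<in> arcs H)"

definition pullback :: "'a digraph \<Rightarrow> ('a \<Rightarrow> 'b) \<Rightarrow> ('b \<Rightarrow> 'c) \<Rightarrow> 'a \<Rightarrow> 'c" where
  "pullback G f \<eta> = restrict (\<eta> \<circ> f) (verts G)"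

lemma isomorphic_iff_digraph_iso: "isomorphic G H \<longleftrightarrow> (\<exists>f. digraph_iso f G H)"
  unfolding isomorphic_def digraph_iso_def ..

lemma digraph_iso_arc:
  "digraph_iso f G H \<Longrightarrow> is_digraph G \<Longrightarrow> (u, w) \<in> arcs G \<Longrightarrow> (f u, f w) \<in> arcs H"
  unfolding digraph_iso_def is_digraph_def by blast

lemma digraph_iso_inv_into:
  assumes iso: "digraph_iso f G H"
  shows "digraph_iso (inv_into (verts G) f) H G"
proof -
  define g where "g = inv_into (verts G) f"
  have bij: "bij_betw f (verts G) (verts H)" using iso unfolding digraph_iso_def by blast
  then have g: "bij_betw g (verts H) (verts G)" unfolding g_def by (rule bij_betw_inv_into)
  have "(a, b) \<in> arcs H \<longleftrightarrow> (g a, g b) \<in> arcs G" if "a \<in> verts H" "b \<in> verts H" for a b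
  proof -
    have "f (g a) = a" "f (g b) = b"
      using bij that unfolding g_def by (simp_all add: bij_betw_inv_into_right)
    moreover have "g a \<in> verts G" "g b \<in> verts G" using g that by (simp_all add: bij_betw_apply)
    ultimately show ?thesis using iso unfolding digraph_iso_def by metis
  qed
  then show ?thesis using g unfolding digraph_iso_def g_def by blast
qed

lemma pullback_in_homs:
  assumes iso: "digraph_iso f G H" and dG: "is_digraph G" and \<eta>: "\<eta> \<in> homs H T"
  shows "pullback G f \<eta> \<in> homs G T"
proof (rule homsI)
  have "\<eta> (f u) \<in> verts T" if "u \<in> verts G" for u
    using iso that homs_PiE[OF \<eta>] unfolding digraph_iso_def
    by (blast intro: bij_betw_apply PiE_mem)
  then show "pullback G f \<eta> \<in> verts G \<rightarrow>\<^sub>E verts T"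
    unfolding pullback_def by (simp add: restrict_PiE_iff)
  fix u w assume uw: "(u, w) \<in> arcs G"
  then have "u \<in> verts G" "w \<in> verts G" using dG unfolding is_digraph_def by auto
  then show "(pullback G f \<eta> u, pullback G f \<eta> w) \<in> arcs T"
    using homs_arc[OF \<eta> digraph_iso_arc[OF iso dG uw]] unfolding pullback_def by simp
qed

lemma inj_on_pullback:
  assumes "f ` verts G = verts H"
  shows "inj_on (pullback G f) (extensional (verts H))"
proof
  fix \<zeta> \<eta> assume ext: "\<zeta> \<in> extensional (verts H)" "\<eta> \<in> extensional (verts H)"
    and eq: "pullback G f \<zeta> = pullback G f \<eta>"
  have "\<zeta> y = \<eta> y" if "y \<in> verts H" for y
  proof -
    from that assms have "y \<in> f ` verts G" by simp
    then obtain u where "u \<in> verts G" "y = f u" by (rule imageE)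
    then show ?thesis using fun_cong[OF eq, of u] unfolding pullback_def by simp
  qed
  then show "\<zeta> = \<eta>" by (intro extensionalityI[OF ext])
qed

lemma pullback_inv_into_pullback:
  assumes bij: "bij_betw f (verts G) (verts H)" and ext: "\<eta> \<in> extensional (verts H)"
  shows "pullback H (inv_into (verts G) f) (pullback G f \<eta>) = \<eta>"
proof (rule extensionalityI[OF _ ext])
  show "pullback H (inv_into (verts G) f) (pullback G f \<eta>) \<in> extensional (verts H)"
    unfolding pullback_def by simp
  fix y assume "y \<in> verts H"
  moreover have "inv_into (verts G) f y \<in> verts G"
    using bij calculation by (metis bij_betw_def inv_into_into)
  ultimately show "pullback H (inv_into (verts G) f) (pullback G f \<eta>) y = \<eta> y"
    using bij unfolding pullback_def by (simp add: bij_betw_inv_into_right)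
qed

text \<open>Applying \<open>Gamma_image_subset\<close> to \<open>f\<close> and to its inverse gives equality.\<close>

lemma Gamma_pullback_image:
  assumes iso: "digraph_iso f G H" and dG: "is_digraph G" and dH: "is_digraph H"
    and v: "v \<in> verts G"
  shows "f ` Gamma G (pullback G f \<eta>) v = Gamma H \<eta> (f v)"
proof
  define g where "g = inv_into (verts G) f"
  have bij: "bij_betw f (verts G) (verts H)" using iso unfolding digraph_iso_def by blast
  have fg: "f (g y) = y" if "y \<in> verts H" for y
    using that bij unfolding g_def by (simp add: bij_betw_inv_into_right)
  have g_maps: "g ` verts H \<subseteq> verts G"
    using bij unfolding g_def by (metis bij_betw_def image_subsetI inv_into_into)
  have f_maps: "f ` verts G \<subseteq> verts H" using bij by (simp add: bij_betw_def)
  have gfv: "g (f v) = v" using v bij unfolding g_def by (simp add: bij_betw_inv_into_left)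
  show "f ` Gamma G (pullback G f \<eta>) v \<subseteq> Gamma H \<eta> (f v)"
  proof (rule Gamma_image_subset[of f G H])
    show "pullback G f \<eta> u = \<eta> (f u)" if "u \<in> verts G" for u
      using that by (simp add: pullback_def)
  qed (use f_maps v digraph_iso_arc[OF iso dG] in auto)
  have "g ` Gamma H \<eta> (f v) \<subseteq> Gamma G (pullback G f \<eta>) (g (f v))"
  proof (rule Gamma_image_subset[of g H G])
    show "\<eta> y = pullback G f \<eta> (g y)" if "y \<in> verts H" for y
      using that g_maps fg unfolding pullback_def by auto
    show "(g a, g b) \<in> arcs G" if "(a, b) \<in> arcs H" for a b
      using digraph_iso_arc[OF digraph_iso_inv_into[OF iso] dH that] unfolding g_def .
  qed (use f_maps g_maps v in auto)
  then have "f ` g ` Gamma H \<eta> (f v) \<subseteq> f ` Gamma G (pullback G f \<eta>) v"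
    unfolding gfv by (rule image_mono)
  moreover have "f ` g ` Gamma H \<eta> (f v) = Gamma H \<eta> (f v)"
    using fg Gamma_subset_verts[of H \<eta> "f v"] by (force simp: image_image)
  ultimately show "Gamma H \<eta> (f v) \<subseteq> f ` Gamma G (pullback G f \<eta>) v" by simp
qed

lemma quot_pullback_eq:
  assumes iso: "digraph_iso f G H" and "is_digraph G" "is_digraph H"
    and "quot H \<zeta> = quot H \<eta>"
  shows "quot G (pullback G f \<zeta>) = quot G (pullback G f \<eta>)"
  unfolding quot_eq_iff
proof
  fix v assume v: "v \<in> verts G"
  have bij: "bij_betw f (verts G) (verts H)" using iso unfolding digraph_iso_def by blast
  have "Gamma H \<zeta> (f v) = Gamma H \<eta> (f v)"
    using assms(4) bij_betw_apply[OF bij v] unfolding quot_eq_iff by blast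
  then have "f ` Gamma G (pullback G f \<zeta>) v = f ` Gamma G (pullback G f \<eta>) v"
    using Gamma_pullback_image[OF assms(1-3) v, of \<zeta>] Gamma_pullback_image[OF assms(1-3) v, of \<eta>]
    by simp
  moreover have "inj_on f (verts G)" using bij by (rule bij_betw_imp_inj_on)
  ultimately show "Gamma G (pullback G f \<zeta>) v = Gamma G (pullback G f \<eta>) v"
    using inj_on_image_eq_iff Gamma_subset_verts by metis
qed

lemma finite_homs:
  assumes "is_digraph G" "is_digraph T"
  shows "finite (homs G T)"
proof -
  have "homs G T \<subseteq> verts G \<rightarrow>\<^sub>E verts T" unfolding homs_def by blast
  moreover have "finite (verts G \<rightarrow>\<^sub>E verts T)"
    using assms unfolding is_digraph_def by (simp add: finite_PiE)
  ultimately show ?thesis by (rule finite_subset)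
qed

lemma finite_Theta: "is_digraph G \<Longrightarrow> is_digraph T \<Longrightarrow> finite (Theta G T \<xi>)"
  unfolding Theta_def by (simp add: finite_homs)

lemma card_Theta_le_pullback:
  assumes iso: "digraph_iso f G H" and dG: "is_digraph G" and dH: "is_digraph H"
    and dT: "is_digraph T"
  shows "card (Theta H T \<eta>) \<le> card (Theta G T (pullback G f \<eta>))"
proof (rule card_inj_on_le)
  have "f ` verts G = verts H" using iso unfolding digraph_iso_def bij_betw_def by blast
  then have "inj_on (pullback G f) (extensional (verts H))" by (rule inj_on_pullback)
  then show "inj_on (pullback G f) (Theta H T \<eta>)"
    by (rule inj_on_subset) (auto simp: Theta_def homs_def PiE_def)
  show "pullback G f ` Theta H T \<eta> \<subseteq> Theta G T (pullback G f \<eta>)"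
    using pullback_in_homs[OF iso dG, of _ T] quot_pullback_eq[OF iso dG dH]
    unfolding Theta_def by blast
  show "finite (Theta G T (pullback G f \<eta>))" using dG dT by (rule finite_Theta)
qed

lemma card_Theta_pullback:
  assumes iso: "digraph_iso f G H" and dG: "is_digraph G" and dH: "is_digraph H"
    and dT: "is_digraph T" and \<eta>: "\<eta> \<in> extensional (verts H)"
  shows "card (Theta G T (pullback G f \<eta>)) = card (Theta H T \<eta>)"
proof (rule antisym)
  have "bij_betw f (verts G) (verts H)" using iso unfolding digraph_iso_def by blast
  then have "pullback H (inv_into (verts G) f) (pullback G f \<eta>) = \<eta>"
    using \<eta> by (rule pullback_inv_into_pullback)
  then show "card (Theta G T (pullback G f \<eta>)) \<le> card (Theta H T \<eta>)"
    using card_Theta_le_pullback[OF digraph_iso_inv_into[OF iso] dH dG dT] by metis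
  show "card (Theta H T \<eta>) \<le> card (Theta G T (pullback G f \<eta>))"
    using iso dG dH dT by (rule card_Theta_le_pullback)
qed

lemma card_Theta_le_transfer:
  assumes iso: "isomorphic G H" and dG: "is_digraph G" and dH: "is_digraph H"
    and dR: "is_digraph R" and dS: "is_digraph S"
    and le: "\<forall>\<eta>\<in>homs H R. card (Theta H R \<eta>) \<le> card (Theta H S \<eta>)"
    and \<xi>: "\<xi> \<in> homs G R"
  shows "card (Theta G R \<xi>) \<le> card (Theta G S \<xi>)"
proof -
  obtain f where f: "digraph_iso f G H" using iso isomorphic_iff_digraph_iso by blast
  define g where "g = inv_into (verts G) f"
  have g: "digraph_iso g H G" unfolding g_def using f by (rule digraph_iso_inv_into)
  have ext: "\<xi> \<in> extensional (verts G)" using \<xi> unfolding homs_def PiE_def by blast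
  have "card (Theta G R \<xi>) = card (Theta H R (pullback H g \<xi>))"
    using card_Theta_pullback[OF g dH dG dR ext] by simp
  also have "\<dots> \<le> card (Theta H S (pullback H g \<xi>))"
    using le pullback_in_homs[OF g dH \<xi>] by blast
  also have "\<dots> = card (Theta G S \<xi>)"
    using card_Theta_pullback[OF g dH dG dS ext] .
  finally show ?thesis .
qed

subsection \<open>Schemes on the representatives\<close>

lemma ex_inj_fiberwise:
  assumes A: "finite A" and B: "finite B"
    and le: "\<And>a. a \<in> A \<Longrightarrow> card {x \<in> A. \<kappa> x = \<kappa> a} \<le> card {y \<in> B. \<mu> y = \<kappa> a}"
  shows "\<exists>\<rho>. inj_on \<rho> A \<and> (\<forall>a\<in>A. \<rho> a \<in> B \<and> \<mu> (\<rho> a) = \<kappa> a)"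
proof -
  have "\<forall>k\<in>\<kappa> ` A. \<exists>h. h ` {x \<in> A. \<kappa> x = k} \<subseteq> {y \<in> B. \<mu> y = k}
      \<and> inj_on h {x \<in> A. \<kappa> x = k}"
  proof
    fix k assume "k \<in> \<kappa> ` A"
    then obtain a where "a \<in> A" "k = \<kappa> a" by blast
    then show "\<exists>h. h ` {x \<in> A. \<kappa> x = k} \<subseteq> {y \<in> B. \<mu> y = k} \<and> inj_on h {x \<in> A. \<kappa> x = k}"
      using le A B by (intro card_le_inj) auto
  qed
  from bchoice[OF this] obtain h where h: "\<forall>k\<in>\<kappa> ` A.
      h k ` {x \<in> A. \<kappa> x = k} \<subseteq> {y \<in> B. \<mu> y = k} \<and> inj_on (h k) {x \<in> A. \<kappa> x = k}"
    by blast
  define \<rho> where "\<rho> a = h (\<kappa> a) a" for a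
  have \<rho>: "\<rho> a \<in> B \<and> \<mu> (\<rho> a) = \<kappa> a" if "a \<in> A" for a
    using h that unfolding \<rho>_def by blast
  have "inj_on \<rho> A"
  proof
    fix a b assume ab: "a \<in> A" "b \<in> A" and eq: "\<rho> a = \<rho> b"
    then have "\<kappa> a = \<kappa> b" using \<rho> by metis
    then show "a = b"
      using h ab eq unfolding \<rho>_def by (auto dest: inj_onD)
  qed
  then show ?thesis using \<rho> by blast
qed

lemma Gamma_leq_iff_card_Theta_le:
  assumes dR: "is_digraph R" and dS: "is_digraph S" and dDr: "\<forall>G\<in>Dr. is_digraph G"
  shows "Gamma_leq Dr R S \<longleftrightarrow>
    (\<forall>G\<in>Dr. \<forall>\<xi>\<in>homs G R. card (Theta G R \<xi>) \<le> card (Theta G S \<xi>))"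
proof
  assume "Gamma_leq Dr R S"
  then obtain \<rho> where hom: "hom_scheme Dr R S \<rho>" and strong: "strong_scheme Dr R S \<rho>"
    and Gamma: "Gamma_scheme Dr R S \<rho>" unfolding Gamma_leq_def by blast
  show "\<forall>G\<in>Dr. \<forall>\<xi>\<in>homs G R. card (Theta G R \<xi>) \<le> card (Theta G S \<xi>)"
  proof (intro ballI card_inj_on_le)
    fix G \<xi> assume G: "G \<in> Dr" and "\<xi> \<in> homs G R"
    show "inj_on (\<rho> G) (Theta G R \<xi>)"
      using strong G unfolding strong_scheme_def Theta_def by (blast intro: inj_on_subset)
    have "quot G (\<rho> G \<zeta>) = quot G \<zeta>" if "\<zeta> \<in> homs G R" for \<zeta>
      using Gamma G that unfolding Gamma_scheme_def quot_eq_iff by blast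
    then show "\<rho> G ` Theta G R \<xi> \<subseteq> Theta G S \<xi>"
      using hom G unfolding hom_scheme_def Theta_def by auto
    show "finite (Theta G S \<xi>)" using dDr G dS by (blast intro: finite_Theta)
  qed
next
  assume le: "\<forall>G\<in>Dr. \<forall>\<xi>\<in>homs G R. card (Theta G R \<xi>) \<le> card (Theta G S \<xi>)"
  have "\<forall>G\<in>Dr. \<exists>\<rho>. inj_on \<rho> (homs G R) \<and>
      (\<forall>\<xi>\<in>homs G R. \<rho> \<xi> \<in> homs G S \<and> quot G (\<rho> \<xi>) = quot G \<xi>)"
  proof
    fix G assume G: "G \<in> Dr"
    show "\<exists>\<rho>. inj_on \<rho> (homs G R) \<and>
        (\<forall>\<xi>\<in>homs G R. \<rho> \<xi> \<in> homs G S \<and> quot G (\<rho> \<xi>) = quot G \<xi>)"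
    proof (rule ex_inj_fiberwise)
      show "finite (homs G R)" "finite (homs G S)"
        using dDr G dR dS by (auto intro: finite_homs)
      show "card {x \<in> homs G R. quot G x = quot G \<xi>}
          \<le> card {y \<in> homs G S. quot G y = quot G \<xi>}" if "\<xi> \<in> homs G R" for \<xi>
        using le G that unfolding Theta_def by blast
    qed
  qed
  from bchoice[OF this] obtain \<rho> where "\<forall>G\<in>Dr. inj_on (\<rho> G) (homs G R) \<and>
      (\<forall>\<xi>\<in>homs G R. \<rho> G \<xi> \<in> homs G S \<and> quot G (\<rho> G \<xi>) = quot G \<xi>)"
    by blast
  then show "Gamma_leq Dr R S"
    unfolding Gamma_leq_def hom_scheme_def strong_scheme_def Gamma_scheme_def quot_eq_iff
    by blast
qed

theorem lemma2:
  fixes R :: "'b digraph" and S :: "'c digraph"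
    and D' Dr :: "'a digraph set"
  assumes "is_digraph R" and "is_digraph S"
    and "\<forall>G\<in>D'. is_digraph G"
    and "system_of_reps D' Dr"
  shows "Gamma_leq Dr R S \<longleftrightarrow>
    (\<forall>G\<in>D'. \<forall>\<xi>\<in>homs G R. card (Theta G R \<xi>) \<le> card (Theta G S \<xi>))"
proof -
  let ?le = "\<lambda>G. \<forall>\<xi>\<in>homs G R. card (Theta G R \<xi>) \<le> card (Theta G S \<xi>)"
  have Dr: "Dr \<subseteq> D'" using assms(4) unfolding system_of_reps_def by blast
  then have dDr: "\<forall>G\<in>Dr. is_digraph G" using assms(3) by blast
  have "(\<forall>G\<in>D'. ?le G) \<longleftrightarrow> (\<forall>G\<in>Dr. ?le G)"
  proof
    assume le: "\<forall>G\<in>Dr. ?le G"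
    show "\<forall>G\<in>D'. ?le G"
    proof
      fix G assume G: "G \<in> D'"
      then obtain H where "H \<in> Dr" "isomorphic G H"
        using assms(4) unfolding system_of_reps_def by blast
      then show "?le G"
        using card_Theta_le_transfer[of G H R S] assms(1-3) G dDr le by blast
    qed
  qed (use Dr in blast)
  then show ?thesis using Gamma_leq_iff_card_Theta_le[OF assms(1,2) dDr] by simp
qed

end
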